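(* Let $0<p\le q<\infty$ and let $k,l,n$ be positive integers. Put $\bar p=\min(1,p)$. Then $$ e_{k+l-1}\bigl(id:\ell_p^n(\mathbb{R})\to\ell_q^n(\mathbb{R})\bigr)\le 2^{1/\bar p}\, e^{p/q}_k\bigl(id:\ell_p^n(\mathbb{R})\to\ell_p^n(\mathbb{R})\bigr)\cdot e_l^{1-p/q}\bigl(id:\ell_p^n(\mathbb{R})\to\ell_\infty^n(\mathbb{R})\bigr). $$
   Context: For $0<p\le\infty$, $\ell_p^n(\mathbb{R})$ denotes $\mathbb{R}^n$ with the (quasi-)norm $\|x\|_p=(\sum_{i=1}^n|x_i|^p)^{1/p}$ for $p<\infty$ and $\|x\|_\infty=\max_i|x_i|$; its unit ball is $B_p^n$. For a bounded linear operator $T:X\to Y$ between quasi-Banach spaces and $k\in\mathbb{N}$, the $k$-th (dyadic) entropy number is $e_k(T)=\inf\{r>0:\exists y_1,\dots,y_{2^{k-1}}\in Y \text{ with } T(B_X)\subset\bigcup_{j=1}^{2^{k-1}}(y_j+rB_Y)\}$, where $B_X,B_Y$ are the closed unit balls. The identity $id:\ell_p^n\to\ell_q^n$ is the identity map on $\mathbb{R}^n$ viewed between these spaces. *)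

theory Defs
  imports "HOL-Analysis.Analysis"
begin

definition lp_norm :: "real \<Rightarrow> real ^ 'n \<Rightarrow> real" where
  "lp_norm p x = (\<Sum>i\<in>UNIV. \<bar>x $ i\<bar> powr p) powr (1 / p)"

definition linf_norm :: "real ^ 'n \<Rightarrow> real" where
  "linf_norm x = Max ((\<lambda>i. \<bar>x $ i\<bar>) ` UNIV)"

text \<open>k-th dyadic entropy number of the identity map from (R^n, NX) to (R^n, NY):
  infimum of r > 0 such that the closed unit ball of NX is covered by 2^(k-1)
  closed NY-balls of radius r (centres anywhere in R^n).\<close>
definition entropy_id ::
  "(real ^ 'n \<Rightarrow> real) \<Rightarrow> (real ^ 'n \<Rightarrow> real) \<Rightarrow> nat \<Rightarrow> real" where
  "entropy_id NX NY k = Inf {r. r > 0 \<and>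
     (\<exists>ys :: nat \<Rightarrow> real ^ 'n. \<forall>x. NX x \<le> 1 \<longrightarrow>
        (\<exists>j < 2 ^ (k - 1). NY (x - ys j) \<le> r))}"

end

theory Submission
  imports Defs
begin

text \<open>
  Intersecting a cover of the unit ball of l_p by 2^(k-1) l_p-balls of radius s with a cover by
  2^(l-1) l_infinity-balls of radius t gives 2^(k+l-2) cells. Two points of one cell differ by at
  most 2^(1/min 1 p) s in l_p (quasi-triangle inequality) and by at most 2t in l_infinity, so the
  interpolation inequality ||u||_q <= ||u||_p^(p/q) ||u||_infinity^(1-p/q) makes one point per
  cell the centre of an l_q-ball of radius 2^(1/min 1 p) s^(p/q) t^(1-p/q) containing the cell.
  Passing to the infima over s and t needs both entropy numbers to be positive, which a
  pigeonhole argument along a coordinate axis shows.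
\<close>

lemma powr_add_le_add_powr:
  fixes x y p :: real
  assumes "0 < p" "p \<le> 1" "0 \<le> x" "0 \<le> y"
  shows "(x + y) powr p \<le> x powr p + y powr p"
proof (cases "x + y = 0")
  case True then show ?thesis using assms by simp
next
  case False
  then have s: "x + y > 0" using assms by linarith
  have "x / (x+y) \<le> (x/(x+y)) powr p" "y / (x+y) \<le> (y/(x+y)) powr p"
    using powr_mono'[of p 1 "x/(x+y)"] powr_mono'[of p 1 "y/(x+y)"] assms s by simp_all
  then have "x/(x+y) + y/(x+y) \<le> (x powr p + y powr p) / (x+y) powr p"
    by (simp add: powr_divide add_divide_distrib)
  then have "1 \<le> (x powr p + y powr p) / (x+y) powr p"
    using s by (simp add: add_divide_distrib[symmetric])
  then show ?thesis using s by (simp add: field_simps)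
qed

lemma powr_add_le_add_powr_ge_one:
  fixes x y p :: real
  assumes "1 \<le> p" "0 \<le> x" "0 \<le> y"
  shows "(x + y) powr p \<le> 2 powr (p - 1) * (x powr p + y powr p)"
proof (cases "x = 0 \<or> y = 0")
  case True
  have "1 \<le> 2 powr (p - 1)" using assms ge_one_powr_ge_zero by simp
  then show ?thesis using True assms
    by (auto intro: order_trans[OF _ mult_right_mono[OF \<open>1 \<le> 2 powr (p - 1)\<close>]])
next
  case False
  have "((1 - 1/2) *\<^sub>R x + (1/2) *\<^sub>R y) powr p \<le> (1 - 1/2) * x powr p + (1/2) * y powr p"
    using convex_onD[OF powr_convex[OF assms(1)], of "1/2" x y] assms False by simp
  then have mid: "((x+y)/2) powr p \<le> (x powr p + y powr p)/2" by (simp add: field_simps)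
  have "(x+y) powr p = 2 powr p * ((x+y)/2) powr p"
    by (simp add: powr_divide)
  also have "\<dots> \<le> 2 powr p * ((x powr p + y powr p)/2)"
    using mid by (simp add: mult_left_mono)
  also have "\<dots> = 2 powr (p - 1) * (x powr p + y powr p)"
    by (simp add: powr_diff)
  finally show ?thesis .
qed

lemma powr_add_le:
  fixes x y p :: real
  assumes "0 < p" "0 \<le> x" "0 \<le> y"
  shows "(x + y) powr p \<le> 2 powr (p / min 1 p - 1) * (x powr p + y powr p)"
  using powr_add_le_add_powr[of p x y] powr_add_le_add_powr_ge_one[of p x y] assms
  by (cases "p \<le> 1") simp_all

lemma lp_norm_nonneg: "0 \<le> lp_norm p x"
  unfolding lp_norm_def by simp

lemma lp_norm_powr:
  assumes "0 < p"
  shows "lp_norm p x powr p = (\<Sum>i\<in>UNIV. \<bar>x $ i\<bar> powr p)"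
  using assms unfolding lp_norm_def by (simp add: powr_powr sum_nonneg)

lemma abs_component_le_lp_norm:
  assumes "0 < p"
  shows "\<bar>x $ i\<bar> \<le> lp_norm p x"
proof -
  have "\<bar>x $ i\<bar> = (\<bar>x $ i\<bar> powr p) powr (1/p)"
    using assms by (simp add: powr_powr)
  also have "\<dots> \<le> (\<Sum>j\<in>UNIV. \<bar>x $ j\<bar> powr p) powr (1/p)"
    using assms by (intro powr_mono2) (auto intro: member_le_sum)
  finally show ?thesis unfolding lp_norm_def .
qed

lemma abs_component_le_linf_norm: "\<bar>x $ i\<bar> \<le> linf_norm x"
  unfolding linf_norm_def by (rule Max_ge) auto

lemma linf_norm_le_lp_norm:
  assumes "0 < p"
  shows "linf_norm x \<le> lp_norm p x"
  unfolding linf_norm_def using abs_component_le_lp_norm[OF assms] by (subst Max_le_iff) auto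

lemma lp_norm_axis:
  assumes "0 < p"
  shows "lp_norm p (axis i t) = \<bar>t\<bar>"
proof -
  have "(\<Sum>j\<in>UNIV. \<bar>axis i t $ j\<bar> powr p) = (\<Sum>j\<in>UNIV. if j = i then \<bar>t\<bar> powr p else 0)"
    by (intro sum.cong) (auto simp: axis_def)
  then show ?thesis using assms unfolding lp_norm_def by (simp add: powr_powr)
qed

lemma lp_norm_quasi_triangle:
  fixes x y w :: "real ^ 'n"
  assumes "0 < p" "lp_norm p (x - y) \<le> s" "lp_norm p (w - y) \<le> s"
  shows "lp_norm p (x - w) \<le> 2 powr (1 / min 1 p) * s"
proof -
  define C where "C = 2 powr (p / min 1 p - 1)"
  have s: "0 \<le> s" using assms(2) lp_norm_nonneg order_trans by blast
  have "lp_norm p (x - w) powr p \<le> (\<Sum>j\<in>UNIV. C * (\<bar>(x - y) $ j\<bar> powr p + \<bar>(w - y) $ j\<bar> powr p))"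
    unfolding lp_norm_powr[OF assms(1)]
  proof (intro sum_mono)
    fix j
    have "\<bar>(x - w) $ j\<bar> powr p \<le> (\<bar>(x - y) $ j\<bar> + \<bar>(w - y) $ j\<bar>) powr p"
      using assms(1) by (intro powr_mono2) auto
    also have "\<dots> \<le> C * (\<bar>(x - y) $ j\<bar> powr p + \<bar>(w - y) $ j\<bar> powr p)"
      unfolding C_def using powr_add_le[OF assms(1)] by simp
    finally show "\<bar>(x - w) $ j\<bar> powr p \<le> C * (\<bar>(x - y) $ j\<bar> powr p + \<bar>(w - y) $ j\<bar> powr p)" .
  qed
  also have "\<dots> = C * (lp_norm p (x - y) powr p + lp_norm p (w - y) powr p)"
    by (simp add: lp_norm_powr[OF assms(1)] sum_distrib_left[symmetric] sum.distrib)
  also have "\<dots> \<le> C * (s powr p + s powr p)"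
    using assms unfolding C_def by (intro mult_left_mono add_mono powr_mono2) (auto simp: lp_norm_nonneg)
  also have "\<dots> = (2 powr (1 / min 1 p) * s) powr p"
    using assms(1) by (simp add: C_def powr_mult powr_powr powr_diff)
  finally show ?thesis
    using assms(1) s powr_less_mono2[of p "2 powr (1 / min 1 p) * s" "lp_norm p (x - w)"]
    by (meson not_le mult_nonneg_nonneg powr_ge_zero)
qed

lemma linf_norm_nonneg: "0 \<le> linf_norm x"
  using abs_component_le_linf_norm[of x] abs_ge_zero order_trans by blast

lemma linf_norm_triangle:
  assumes "linf_norm (x - y) \<le> t" "linf_norm (w - y) \<le> t"
  shows "linf_norm (x - w) \<le> 2 * t"
proof -
  have "\<bar>(x - w) $ i\<bar> \<le> 2 * t" for i
  proof -
    have "\<bar>(x - w) $ i\<bar> \<le> \<bar>(x - y) $ i\<bar> + \<bar>(w - y) $ i\<bar>" by simp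
    also have "\<dots> \<le> t + t"
      using abs_component_le_linf_norm[of "x - y" i] abs_component_le_linf_norm[of "w - y" i] assms
      by linarith
    finally show ?thesis by simp
  qed
  then show ?thesis unfolding linf_norm_def by (subst Max_le_iff) auto
qed

lemma lp_norm_le_interpolation:
  assumes "0 < p" "p \<le> q"
  shows "lp_norm q x \<le> lp_norm p x powr (p / q) * linf_norm x powr (1 - p / q)"
proof -
  define M where "M = linf_norm x"
  have q: "0 < q" using assms by linarith
  have "(\<Sum>i\<in>UNIV. \<bar>x $ i\<bar> powr q) \<le> (\<Sum>i\<in>UNIV. \<bar>x $ i\<bar> powr p * M powr (q - p))"
  proof (intro sum_mono)
    fix i
    have "\<bar>x $ i\<bar> powr q = \<bar>x $ i\<bar> powr p * \<bar>x $ i\<bar> powr (q - p)"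
      by (simp add: powr_add[symmetric])
    also have "\<dots> \<le> \<bar>x $ i\<bar> powr p * M powr (q - p)"
      using assms unfolding M_def by (intro mult_left_mono powr_mono2 abs_component_le_linf_norm) auto
    finally show "\<bar>x $ i\<bar> powr q \<le> \<bar>x $ i\<bar> powr p * M powr (q - p)" .
  qed
  also have "\<dots> = lp_norm p x powr p * M powr (q - p)"
    by (simp add: lp_norm_powr[OF assms(1)] sum_distrib_right)
  finally have "lp_norm q x \<le> (lp_norm p x powr p * M powr (q - p)) powr (1 / q)"
    unfolding lp_norm_def using q by (intro powr_mono2) (auto intro: sum_nonneg)
  also have "\<dots> = lp_norm p x powr (p / q) * M powr (1 - p / q)"
    using q by (simp add: powr_mult powr_powr diff_divide_distrib)
  finally show ?thesis unfolding M_def .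
qed

lemma lp_norm_le_interpolation_bound:
  assumes "0 < p" "p \<le> q" "lp_norm p u \<le> 2 powr (1 / min 1 p) * s" "linf_norm u \<le> 2 * t"
  shows "lp_norm q u \<le> 2 powr (1 / min 1 p) * s powr (p / q) * t powr (1 - p / q)"
proof -
  define a where "a = 1 / min 1 p"
  have q: "0 < q" and pq: "p / q \<le> 1" using assms by auto
  have "0 \<le> 2 powr a * s" "0 \<le> 2 * t"
    using assms(3,4) lp_norm_nonneg[of p u] linf_norm_nonneg[of u] unfolding a_def by linarith+
  then have "0 \<le> s" "0 \<le> t" by (simp_all add: zero_le_mult_iff)
  have "lp_norm q u \<le> (2 powr a * s) powr (p / q) * (2 * t) powr (1 - p / q)"
    using assms q pq unfolding a_def
    by (intro order_trans[OF lp_norm_le_interpolation[OF assms(1,2)]] mult_mono powr_mono2)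
       (auto simp: lp_norm_nonneg linf_norm_nonneg)
  also have "\<dots> = 2 powr (a * (p / q) + (1 - p / q)) * (s powr (p / q) * t powr (1 - p / q))"
    by (simp add: powr_mult powr_powr powr_add)
  also have "\<dots> \<le> 2 powr a * (s powr (p / q) * t powr (1 - p / q))"
  proof (intro mult_right_mono powr_mono)
    have "(a - 1) * (p / q - 1) \<le> 0"
      using assms(1) pq unfolding a_def by (intro mult_nonneg_nonpos) auto
    then show "a * (p / q) + (1 - p / q) \<le> a" by (simp add: ring_distribs diff_divide_distrib)
  qed auto
  finally show ?thesis unfolding a_def by (simp add: mult.assoc)
qed

definition entropy_radius ::
  "(real ^ 'n \<Rightarrow> real) \<Rightarrow> (real ^ 'n \<Rightarrow> real) \<Rightarrow> nat \<Rightarrow> real \<Rightarrow> bool" where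
  "entropy_radius NX NY k r \<longleftrightarrow> r > 0 \<and>
     (\<exists>ys :: nat \<Rightarrow> real ^ 'n. \<forall>x. NX x \<le> 1 \<longrightarrow> (\<exists>j < 2 ^ (k - 1). NY (x - ys j) \<le> r))"

lemma entropy_id_eq_Inf: "entropy_id NX NY k = Inf (Collect (entropy_radius NX NY k))"
  unfolding entropy_id_def entropy_radius_def ..

lemma entropy_id_le_radius:
  assumes "entropy_radius NX NY k r"
  shows "entropy_id NX NY k \<le> r"
  unfolding entropy_id_eq_Inf
  using assms by (intro cInf_lower bdd_belowI[of _ 0]) (auto simp: entropy_radius_def)

lemma entropy_radius_one:
  assumes "\<And>x. NY x \<le> NX x"
  shows "entropy_radius NX NY k 1"
  unfolding entropy_radius_def
  using assms by (intro conjI exI[of _ "\<lambda>_. 0"]) (auto intro!: exI[of _ 0] intro: order_trans)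

lemma entropy_radius_lower_bound:
  fixes NX NY :: "real ^ 'n \<Rightarrow> real"
  assumes comp: "\<And>x. \<bar>x $ i\<bar> \<le> NY x"
    and axis: "\<And>t. 0 \<le> t \<Longrightarrow> t \<le> 1 \<Longrightarrow> NX (axis i t) \<le> 1"
    and r: "entropy_radius NX NY k r"
  shows "1 / (2 * 2 ^ (k - 1)) \<le> r"
proof -
  define N :: nat where "N = 2 ^ (k - 1)"
  have N: "N > 0" unfolding N_def by simp
  from r obtain ys :: "nat \<Rightarrow> real ^ 'n"
    where ys: "\<And>x. NX x \<le> 1 \<Longrightarrow> \<exists>j < N. NY (x - ys j) \<le> r"
    unfolding entropy_radius_def N_def by auto
  define xs :: "nat \<Rightarrow> real ^ 'n" where "xs m = axis i (real m / real N)" for m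
  have "\<exists>j < N. NY (xs m - ys j) \<le> r" if "m \<in> {0..N}" for m
    using that N unfolding xs_def by (intro ys axis) auto
  then obtain f where f: "\<And>m. m \<in> {0..N} \<Longrightarrow> f m < N \<and> NY (xs m - ys (f m)) \<le> r"
    by metis
  \<comment> \<open>the N + 1 equally spaced points xs m share only N centres\<close>
  have "card (f ` {0..N}) \<le> N"
    using f by (metis card_lessThan card_mono finite_lessThan image_subsetI lessThan_iff)
  then have "\<not> inj_on f {0..N}" by (intro pigeonhole) simp
  then obtain m1 m2 where m: "m1 \<in> {0..N}" "m2 \<in> {0..N}" "m1 \<noteq> m2" "f m1 = f m2"
    unfolding inj_on_def by blast
  have "1 / real N \<le> \<bar>real m1 - real m2\<bar> / real N"
    using m(3) N by (intro divide_right_mono) auto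
  also have "\<dots> = \<bar>(xs m1 - ys (f m1)) $ i - (xs m2 - ys (f m2)) $ i\<bar>"
    using m(4) N unfolding xs_def by (simp add: diff_divide_distrib[symmetric])
  also have "\<dots> \<le> \<bar>(xs m1 - ys (f m1)) $ i\<bar> + \<bar>(xs m2 - ys (f m2)) $ i\<bar>" by simp
  also have "\<dots> \<le> r + r"
    using comp[of "xs m1 - ys (f m1)"] comp[of "xs m2 - ys (f m2)"] f[OF m(1)] f[OF m(2)]
    by linarith
  finally show ?thesis using N unfolding N_def by (simp add: field_simps)
qed

lemma entropy_id_pos:
  fixes NX NY :: "real ^ 'n \<Rightarrow> real"
  assumes "\<And>x i. \<bar>x $ i\<bar> \<le> NY x"
    and "\<And>i t. 0 \<le> t \<Longrightarrow> t \<le> 1 \<Longrightarrow> NX (axis i t) \<le> 1"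
    and "entropy_radius NX NY k r"
  shows "0 < entropy_id NX NY k"
proof -
  have "1 / (2 * 2 ^ (k - 1)) \<le> entropy_id NX NY k"
    unfolding entropy_id_eq_Inf using assms entropy_radius_lower_bound[of undefined NY NX k]
    by (intro cInf_greatest) auto
  moreover have "0 < 1 / (2 * 2 ^ (k - 1) :: real)" by simp
  ultimately show ?thesis by linarith
qed

lemma common_refinement_centres:
  assumes "\<And>x. x \<in> A \<Longrightarrow> \<exists>j < K. P j x" and "\<And>x. x \<in> A \<Longrightarrow> \<exists>i < L. Q i x"
  obtains c :: "nat \<Rightarrow> 'a"
  where "\<And>x. x \<in> A \<Longrightarrow> \<exists>m < K * L. \<exists>j i. P j x \<and> Q i x \<and> P j (c m) \<and> Q i (c m)"
proof
  define c where "c m = (SOME w. P (m mod K) w \<and> Q (m div K) w)" for m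
  fix x assume "x \<in> A"
  then obtain j i where ji: "j < K" "i < L" "P j x" "Q i x" using assms by blast
  define m where "m = j + K * i"
  have "m < K * (i + 1)" unfolding m_def using ji by simp
  also have "\<dots> \<le> K * L" using ji by (intro mult_left_mono) auto
  finally have "m < K * L" .
  moreover have "m mod K = j" "m div K = i" unfolding m_def using ji by auto
  then have "P j (c m) \<and> Q i (c m)"
    unfolding c_def using ji by (metis (mono_tags, lifting) someI)
  ultimately show "\<exists>m < K * L. \<exists>j i. P j x \<and> Q i x \<and> P j (c m) \<and> Q i (c m)"
    using ji by blast
qed

lemma entropy_radius_lp_lq:
  fixes p q s t :: real and k l :: nat
  assumes p: "0 < p" and pq: "p \<le> q" and "k \<ge> 1" and "l \<ge> 1"
    and s: "entropy_radius (lp_norm p :: real ^ 'n \<Rightarrow> real) (lp_norm p) k s"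
    and t: "entropy_radius (lp_norm p :: real ^ 'n \<Rightarrow> real) linf_norm l t"
  shows "entropy_radius (lp_norm p :: real ^ 'n \<Rightarrow> real) (lp_norm q) (k + l - 1)
    (2 powr (1 / min 1 p) * s powr (p / q) * t powr (1 - p / q))"
proof -
  from s obtain ys :: "nat \<Rightarrow> real ^ 'n"
    where "s > 0" and ys: "\<And>x. lp_norm p x \<le> 1 \<Longrightarrow> \<exists>j < 2 ^ (k - 1). lp_norm p (x - ys j) \<le> s"
    unfolding entropy_radius_def by auto
  from t obtain zs :: "nat \<Rightarrow> real ^ 'n"
    where "t > 0" and zs: "\<And>x. lp_norm p x \<le> 1 \<Longrightarrow> \<exists>i < 2 ^ (l - 1). linf_norm (x - zs i) \<le> t"
    unfolding entropy_radius_def by auto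
  obtain c :: "nat \<Rightarrow> real ^ 'n" where c: "\<And>x. x \<in> {x. lp_norm p x \<le> 1} \<Longrightarrow>
      \<exists>m < 2 ^ (k - 1) * 2 ^ (l - 1). \<exists>j i. lp_norm p (x - ys j) \<le> s \<and> linf_norm (x - zs i) \<le> t
        \<and> lp_norm p (c m - ys j) \<le> s \<and> linf_norm (c m - zs i) \<le> t"
    using common_refinement_centres[of "{x. lp_norm p x \<le> 1}" "2 ^ (k - 1)"
        "\<lambda>j x. lp_norm p (x - ys j) \<le> s" "2 ^ (l - 1)" "\<lambda>i x. linf_norm (x - zs i) \<le> t"] ys zs
    by blast
  have "\<exists>m < 2 ^ (k + l - 1 - 1).
      lp_norm q (x - c m) \<le> 2 powr (1 / min 1 p) * s powr (p / q) * t powr (1 - p / q)"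
    if "lp_norm p x \<le> 1" for x
  proof -
    from c that obtain m j i where "m < 2 ^ (k - 1) * 2 ^ (l - 1)"
      and "lp_norm p (x - ys j) \<le> s" "linf_norm (x - zs i) \<le> t"
        "lp_norm p (c m - ys j) \<le> s" "linf_norm (c m - zs i) \<le> t"
      by blast
    moreover have "2 ^ (k - 1) * 2 ^ (l - 1) = (2 :: nat) ^ (k + l - 1 - 1)"
      using assms by (simp add: power_add[symmetric])
    ultimately show ?thesis
      by (metis lp_norm_le_interpolation_bound p pq lp_norm_quasi_triangle linf_norm_triangle)
  qed
  then show ?thesis
    unfolding entropy_radius_def using \<open>s > 0\<close> \<open>t > 0\<close> by auto
qed

lemma le_mult_powr_Inf:
  fixes S T :: "real set" and a b c E :: real
  assumes "S \<noteq> {}" "T \<noteq> {}" "\<And>s. s \<in> S \<Longrightarrow> 0 < s" "\<And>t. t \<in> T \<Longrightarrow> 0 < t"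
    and "0 < Inf S" "0 < Inf T" "0 \<le> a" "0 \<le> b" "0 \<le> c"
    and bound: "\<And>s t. s \<in> S \<Longrightarrow> t \<in> T \<Longrightarrow> E \<le> c * s powr a * t powr b"
  shows "E \<le> c * Inf S powr a * Inf T powr b"
proof (rule tendsto_lowerbound)
  show "((\<lambda>\<delta>. c * (Inf S + \<delta>) powr a * (Inf T + \<delta>) powr b)
      \<longlongrightarrow> c * Inf S powr a * Inf T powr b) (at_right 0)"
    using assms by (auto intro!: tendsto_eq_intros)
  have "E \<le> c * (Inf S + \<delta>) powr a * (Inf T + \<delta>) powr b" if \<delta>: "0 < \<delta>" for \<delta>
  proof -
    obtain s where s: "s \<in> S" "s < Inf S + \<delta>"
      using cInf_lessD[OF assms(1), of "Inf S + \<delta>"] \<delta> by auto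
    obtain t where t: "t \<in> T" "t < Inf T + \<delta>"
      using cInf_lessD[OF assms(2), of "Inf T + \<delta>"] \<delta> by auto
    have "E \<le> c * s powr a * t powr b" using bound s t by blast
    also have "\<dots> \<le> c * (Inf S + \<delta>) powr a * (Inf T + \<delta>) powr b"
      using assms s t by (intro mult_mono powr_mono2) (auto simp: less_imp_le)
    finally show ?thesis .
  qed
  then show "\<forall>\<^sub>F \<delta> in at_right 0. E \<le> c * (Inf S + \<delta>) powr a * (Inf T + \<delta>) powr b"
    by (rule eventually_mono[OF eventually_at_right_less])
qed auto

theorem lemma8:
  fixes p q :: real and k l :: nat
  assumes "0 < p" and "p \<le> q" and "k \<ge> 1" and "l \<ge> 1"
  shows "entropy_id (lp_norm p :: real ^ 'n \<Rightarrow> real) (lp_norm q) (k + l - 1)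
    \<le> 2 powr (1 / min 1 p)
       * entropy_id (lp_norm p :: real ^ 'n \<Rightarrow> real) (lp_norm p) k powr (p / q)
       * entropy_id (lp_norm p :: real ^ 'n \<Rightarrow> real) linf_norm l powr (1 - p / q)"
proof -
  let ?S = "Collect (entropy_radius (lp_norm p :: real ^ 'n \<Rightarrow> real) (lp_norm p) k)"
  let ?T = "Collect (entropy_radius (lp_norm p :: real ^ 'n \<Rightarrow> real) linf_norm l)"
  have "1 \<in> ?S" "1 \<in> ?T"
    using linf_norm_le_lp_norm[OF assms(1)] by (auto intro: entropy_radius_one)
  moreover have "lp_norm p (axis i t :: real ^ 'n) \<le> 1" if "0 \<le> t" "t \<le> 1" for i t
    using that by (simp add: lp_norm_axis[OF assms(1)])
  ultimately have "0 < Inf ?S" "0 < Inf ?T"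
    using entropy_id_pos abs_component_le_lp_norm[OF assms(1)] abs_component_le_linf_norm
    unfolding entropy_id_eq_Inf by (metis mem_Collect_eq)+
  moreover have "entropy_id (lp_norm p :: real ^ 'n \<Rightarrow> real) (lp_norm q) (k + l - 1)
      \<le> 2 powr (1 / min 1 p) * s powr (p / q) * t powr (1 - p / q)" if "s \<in> ?S" "t \<in> ?T" for s t
    using that assms by (intro entropy_id_le_radius entropy_radius_lp_lq) auto
  moreover have "?S \<noteq> {}" "?T \<noteq> {}" using \<open>1 \<in> ?S\<close> \<open>1 \<in> ?T\<close> by blast+
  ultimately show ?thesis
    unfolding entropy_id_eq_Inf[of "lp_norm p" "lp_norm p"] entropy_id_eq_Inf[of "lp_norm p" linf_norm]
    using assms by (intro le_mult_powr_Inf) (auto simp: entropy_radius_def)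
qed

end
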